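(* Let $G$ be a $(\Delta+1)$-graph and let $H$ be a subgraph of a regular $(\Delta+1)$-graph $H'$ such that $$\Delta(G)+1\ \ge\ \Delta(H')-\Delta(H).$$ Then $\chi_i(G\,\square\, H)\le \Delta(G\,\square\, H)+2$.
   Context: All graphs are finite and simple. An incidence of a graph $G$ is a pair $(v,e)$ with $v\in V(G)$, $e\in E(G)$ and $v\in e$. Two incidences $(v,e)$ and $(u,f)$ are adjacent if $v=u$, or $e=f$, or $vu\in\{e,f\}$. An incidence coloring of $G$ assigns colors to all incidences so that adjacent incidences receive distinct colors. $\chi_i(G)$ is the least number of colors in an incidence coloring of $G$. $\Delta(G)$ denotes the maximum degree. For a positive integer $k$, $G$ is a $(\Delta+k)$-graph if it admits an incidence coloring with at most $\Delta(G)+k$ colors. $G\,\square\,H$ denotes the Cartesian product: vertex set $V(G)\times V(H)$, with $(u,v)\sim(u',v')$ iff ($uu'\in E(G)$ and $v=v'$) or ($u=u'$ and $vv'\in E(H)$). *)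

theory Defs
  imports Main
begin

type_synonym 'a graph = "'a set \<times> 'a set set"

definition verts :: "'a graph \<Rightarrow> 'a set" where "verts G = fst G"
definition edges :: "'a graph \<Rightarrow> 'a set set" where "edges G = snd G"

definition simple_graph :: "'a graph \<Rightarrow> bool" where
  "simple_graph G \<longleftrightarrow> finite (verts G) \<and>
     (\<forall>e\<in>edges G. e \<subseteq> verts G \<and> card e = 2)"

definition degree :: "'a graph \<Rightarrow> 'a \<Rightarrow> nat" where
  "degree G v = card {e \<in> edges G. v \<in> e}"

definition max_degree :: "'a graph \<Rightarrow> nat" where
  "max_degree G = Max (insert 0 (degree G ` verts G))"

definition regular :: "'a graph \<Rightarrow> bool" where
  "regular G \<longleftrightarrow> (\<forall>v\<in>verts G. degree G v = max_degree G)"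

definition subgraph :: "'a graph \<Rightarrow> 'a graph \<Rightarrow> bool" where
  "subgraph H G \<longleftrightarrow> simple_graph H \<and> simple_graph G \<and>
     verts H \<subseteq> verts G \<and> edges H \<subseteq> edges G"

definition incidences :: "'a graph \<Rightarrow> ('a \<times> 'a set) set" where
  "incidences G = {(v, e). e \<in> edges G \<and> v \<in> e}"

definition inc_adjacent :: "('a \<times> 'a set) \<Rightarrow> ('a \<times> 'a set) \<Rightarrow> bool" where
  "inc_adjacent i j \<longleftrightarrow> (case i of (v, e) \<Rightarrow> case j of (u, f) \<Rightarrow>
      v = u \<or> e = f \<or> {v, u} \<in> {e, f})"

definition incidence_coloring :: "'a graph \<Rightarrow> ('a \<times> 'a set \<Rightarrow> nat) \<Rightarrow> nat \<Rightarrow> bool" where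
  "incidence_coloring G c k \<longleftrightarrow>
     (\<forall>i\<in>incidences G. c i < k) \<and>
     (\<forall>i\<in>incidences G. \<forall>j\<in>incidences G. i \<noteq> j \<and> inc_adjacent i j \<longrightarrow> c i \<noteq> c j)"

definition incidence_chromatic :: "'a graph \<Rightarrow> nat" where
  "incidence_chromatic G = (LEAST k. \<exists>c. incidence_coloring G c k)"

definition delta_plus_graph :: "nat \<Rightarrow> 'a graph \<Rightarrow> bool" where
  "delta_plus_graph k G \<longleftrightarrow> (\<exists>c. incidence_coloring G c (max_degree G + k))"

definition cartesian_product :: "'a graph \<Rightarrow> 'b graph \<Rightarrow> ('a \<times> 'b) graph" where
  "cartesian_product G H =
     (verts G \<times> verts H,
      {{(u, v), (u', v)} | u u' v. {u, u'} \<in> edges G \<and> v \<in> verts H} \<union>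
      {{(u, v), (u, v')} | u v v'. u \<in> verts G \<and> {v, v'} \<in> edges H})"

end

theory Submission
  imports Defs
begin

text \<open>
  With N = Delta(G) + Delta(H) + 2 colors, an incidence of an H-layer edge keeps its color under a
  (Delta(H') + 1)-coloring c of H', and in the G-layer over v a (Delta(G) + 1)-coloring of G is
  renamed injectively into colors that c does not use on the H-edges at v.  At most Delta(H) + 1
  colors are excluded: the incidences (v, e) of H contribute at most Delta(H); and since H' is
  Delta(H')-regular, its incidences (v, e') use all but one of the Delta(H') + 1 colors, while every
  incidence (w, {w, v}) is adjacent to all of them, so all these share the one remaining color.
  Finally Delta(G \<box> H) \<ge> Delta(G) + Delta(H).
\<close>

section \<open>Graphs and incidence colorings\<close>

lemma finite_edges: "simple_graph G \<Longrightarrow> finite (edges G)"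
  unfolding simple_graph_def by (metis Pow_iff finite_Pow_iff rev_finite_subset subsetI)

lemma edge_doubleton:
  assumes "simple_graph G" "e \<in> edges G"
  obtains a b where "e = {a, b}" "a \<noteq> b"
  using assms by (auto simp: simple_graph_def card_2_iff)

lemma degree_le_max_degree:
  assumes "simple_graph G"
  shows "degree G v \<le> max_degree G"
proof (cases "v \<in> verts G")
  case True
  with assms show ?thesis
    unfolding max_degree_def by (intro Max_ge) (auto simp: simple_graph_def)
next
  case False
  with assms have "{e \<in> edges G. v \<in> e} = {}" by (auto simp: simple_graph_def)
  then show ?thesis unfolding degree_def by (metis card.empty zero_le)
qed

lemma max_degree_attained:
  assumes "finite (verts G)" "verts G \<noteq> {}"
  obtains u where "u \<in> verts G" "degree G u = max_degree G"
proof -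
  have "max_degree G = Max (degree G ` verts G)"
    using assms by (simp add: max_degree_def Max_insert)
  moreover have "Max (degree G ` verts G) \<in> degree G ` verts G"
    using assms by (intro Max_in) auto
  ultimately show ?thesis using that by auto
qed

lemma inc_adjacent_sym: "inc_adjacent i j \<longleftrightarrow> inc_adjacent j i"
  by (cases i; cases j) (auto simp: inc_adjacent_def)

lemma incidence_coloring_range:
  "incidence_coloring G c k \<Longrightarrow> (w, e) \<in> incidences G \<Longrightarrow> c (w, e) < k"
  by (simp add: incidence_coloring_def)

lemma incidence_chromatic_le:
  "incidence_coloring G c k \<Longrightarrow> incidence_chromatic G \<le> k"
  unfolding incidence_chromatic_def by (intro Least_le) blast

lemma incidence_chromatic_eq_0_if_no_edges:
  assumes "edges G = {}"
  shows "incidence_chromatic G = 0"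
proof -
  have "incidence_coloring G c 0" for c
    using assms by (simp add: incidence_coloring_def incidences_def)
  then show ?thesis using incidence_chromatic_le by blast
qed

lemma incidence_coloring_subgraph:
  assumes "incidence_coloring H' c k" "edges H \<subseteq> edges H'" "k \<le> N"
  shows "incidence_coloring H c N"
proof -
  have "incidences H \<subseteq> incidences H'" using assms(2) by (auto simp: incidences_def)
  with assms(1,3) show ?thesis unfolding incidence_coloring_def by (meson less_le_trans subsetD)
qed

lemma inj_into_complement:
  assumes "finite S" "card S + k \<le> N"
  obtains f :: "nat \<Rightarrow> nat" where "inj_on f {..<k}" "f ` {..<k} \<subseteq> {..<N} - S"
proof -
  have "card {..<k} \<le> card ({..<N} - S)"
    using diff_card_le_card_Diff[OF assms(1), of "{..<N}"] assms(2) by simp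
  then obtain f where "f ` {..<k} \<subseteq> {..<N} - S" "inj_on f {..<k}"
    using card_le_inj[of "{..<k}" "{..<N} - S"] by blast
  then show ?thesis using that by blast
qed

lemma inj_on_colors_at_vertex:
  assumes "incidence_coloring G c k"
  shows "inj_on (\<lambda>e. c (v, e)) {e \<in> edges G. v \<in> e}"
proof (rule inj_onI)
  fix e e' assume e: "e \<in> {e \<in> edges G. v \<in> e}" "e' \<in> {e \<in> edges G. v \<in> e}"
    and same: "c (v, e) = c (v, e')"
  have "(v, e) \<in> incidences G" "(v, e') \<in> incidences G"
    using e by (simp_all add: incidences_def)
  moreover have "inc_adjacent (v, e) (v, e')" by (simp add: inc_adjacent_def)
  ultimately show "e = e'" using assms same unfolding incidence_coloring_def by blast
qed

section \<open>The Cartesian product\<close>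

lemma edges_cartesian_product:
  assumes "simple_graph G" "simple_graph H"
  shows "edges (cartesian_product G H) =
           {(\<lambda>a. (a, v)) ` e | e v. e \<in> edges G \<and> v \<in> verts H} \<union>
           {Pair u ` f | u f. u \<in> verts G \<and> f \<in> edges H}"
proof -
  have "{{(u, v), (u', v)} | u u' v. {u, u'} \<in> edges G \<and> v \<in> verts H} =
        {(\<lambda>a. (a, v)) ` e | e v. e \<in> edges G \<and> v \<in> verts H}"
  proof (intro equalityI subsetI)
    fix x assume "x \<in> {{(u, v), (u', v)} | u u' v. {u, u'} \<in> edges G \<and> v \<in> verts H}"
    then obtain u u' v where "x = (\<lambda>a. (a, v)) ` {u, u'}" "{u, u'} \<in> edges G" "v \<in> verts H"
      by auto
    then show "x \<in> {(\<lambda>a. (a, v)) ` e | e v. e \<in> edges G \<and> v \<in> verts H}" by blast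
  next
    fix x assume "x \<in> {(\<lambda>a. (a, v)) ` e | e v. e \<in> edges G \<and> v \<in> verts H}"
    then obtain e v where x: "x = (\<lambda>a. (a, v)) ` e" "e \<in> edges G" "v \<in> verts H" by blast
    moreover obtain a b where "e = {a, b}" using edge_doubleton[OF assms(1) x(2)] by metis
    ultimately show "x \<in> {{(u, v), (u', v)} | u u' v. {u, u'} \<in> edges G \<and> v \<in> verts H}"
      by auto
  qed
  moreover have "{{(u, v), (u, v')} | u v v'. u \<in> verts G \<and> {v, v'} \<in> edges H} =
        {Pair u ` f | u f. u \<in> verts G \<and> f \<in> edges H}"
  proof (intro equalityI subsetI)
    fix x assume "x \<in> {{(u, v), (u, v')} | u v v'. u \<in> verts G \<and> {v, v'} \<in> edges H}"
    then obtain u v v' where "x = Pair u ` {v, v'}" "u \<in> verts G" "{v, v'} \<in> edges H"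
      by auto
    then show "x \<in> {Pair u ` f | u f. u \<in> verts G \<and> f \<in> edges H}" by blast
  next
    fix x assume "x \<in> {Pair u ` f | u f. u \<in> verts G \<and> f \<in> edges H}"
    then obtain u f where x: "x = Pair u ` f" "u \<in> verts G" "f \<in> edges H" by blast
    moreover obtain a b where "f = {a, b}" using edge_doubleton[OF assms(2) x(3)] by metis
    ultimately show "x \<in> {{(u, v), (u, v')} | u v v'. u \<in> verts G \<and> {v, v'} \<in> edges H}"
      by auto
  qed
  ultimately show ?thesis unfolding cartesian_product_def edges_def by simp
qed

lemma incidence_cartesian_product_cases [consumes 3]:
  assumes sG: "simple_graph G" and sH: "simple_graph H"
    and i: "i \<in> incidences (cartesian_product G H)"
  obtains (left) a e v where "i = ((a, v), (\<lambda>x. (x, v)) ` e)" "(a, e) \<in> incidences G"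
  | (right) b f u where "i = ((u, b), Pair u ` f)" "(b, f) \<in> incidences H"
proof -
  obtain x e where x: "i = (x, e)" "e \<in> edges (cartesian_product G H)" "x \<in> e"
    using i by (auto simp: incidences_def)
  from x(2) consider e' v where "e = (\<lambda>x. (x, v)) ` e'" "e' \<in> edges G"
    | u f where "e = Pair u ` f" "f \<in> edges H"
    unfolding edges_cartesian_product[OF sG sH] by blast
  then show ?thesis
  proof cases
    case 1
    with x left show ?thesis by (auto simp: incidences_def)
  next
    case 2
    with x right show ?thesis by (auto simp: incidences_def)
  qed
qed

lemma simple_graph_cartesian_product:
  assumes "simple_graph G" "simple_graph H"
  shows "simple_graph (cartesian_product G H)"
proof -
  have "x \<subseteq> verts (cartesian_product G H) \<and> card x = 2"
    if x: "x \<in> edges (cartesian_product G H)" for x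
  proof -
    consider e v where "x = (\<lambda>a. (a, v)) ` e" "e \<in> edges G" "v \<in> verts H"
      | u f where "x = Pair u ` f" "u \<in> verts G" "f \<in> edges H"
      using x unfolding edges_cartesian_product[OF assms] by blast
    then show ?thesis
    proof cases
      case 1
      then show ?thesis using assms(1)
        by (auto simp: card_image inj_on_def simple_graph_def cartesian_product_def verts_def)
    next
      case 2
      then show ?thesis using assms(2)
        by (auto simp: card_image inj_on_def simple_graph_def cartesian_product_def verts_def)
    qed
  qed
  moreover have "finite (verts (cartesian_product G H))"
    using assms by (simp add: cartesian_product_def verts_def simple_graph_def)
  ultimately show ?thesis unfolding simple_graph_def by blast
qed

lemma edges_cartesian_product_eq_empty:
  assumes "simple_graph G" "simple_graph H" "verts G = {} \<or> verts H = {}"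
  shows "edges (cartesian_product G H) = {}"
proof -
  have "verts (cartesian_product G H) = {}"
    using assms(3) by (auto simp: cartesian_product_def verts_def)
  then show ?thesis
    using simple_graph_cartesian_product[OF assms(1,2)] by (auto simp: simple_graph_def)
qed

lemma degree_cartesian_product_ge:
  assumes sG: "simple_graph G" and sH: "simple_graph H"
    and u: "u \<in> verts G" and v: "v \<in> verts H"
  shows "degree G u + degree H v \<le> degree (cartesian_product G H) (u, v)"
proof -
  define EG where "EG = {e \<in> edges G. u \<in> e}"
  define EH where "EH = {f \<in> edges H. v \<in> f}"
  let ?L = "image (\<lambda>a. (a, v)) ` EG" and ?R = "image (Pair u) ` EH"
  have inj_L: "inj_on (image (\<lambda>a. (a, v))) EG" and inj_R: "inj_on (image (Pair u)) EH"
    by (simp_all add: inj_on_def inj_image_eq_iff inj_def)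
  have "?L \<inter> ?R = {}"
  proof (rule ccontr)
    assume "?L \<inter> ?R \<noteq> {}"
    then obtain e f where "e \<in> EG" "f \<in> EH" and ef: "(\<lambda>a. (a, v)) ` e = Pair u ` f" by blast
    then obtain a b where "e = {a, b}" "a \<noteq> b" using edge_doubleton[OF sG] EG_def by blast
    with ef have "(a, v) \<in> Pair u ` f" "(b, v) \<in> Pair u ` f" by blast+
    then show False using \<open>a \<noteq> b\<close> by blast
  qed
  moreover have "?L \<union> ?R \<subseteq> {e \<in> edges (cartesian_product G H). (u, v) \<in> e}"
  proof
    fix x assume "x \<in> ?L \<union> ?R"
    then consider e where "e \<in> EG" "x = (\<lambda>a. (a, v)) ` e"
      | f where "f \<in> EH" "x = Pair u ` f" by blast
    then show "x \<in> {e \<in> edges (cartesian_product G H). (u, v) \<in> e}"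
    proof cases
      case 1
      then have "x \<in> edges (cartesian_product G H)"
        using v unfolding edges_cartesian_product[OF sG sH] EG_def by blast
      with 1 show ?thesis by (auto simp: EG_def)
    next
      case 2
      then have "x \<in> edges (cartesian_product G H)"
        using u unfolding edges_cartesian_product[OF sG sH] EH_def by blast
      with 2 show ?thesis by (auto simp: EH_def)
    qed
  qed
  moreover have "finite {e \<in> edges (cartesian_product G H). (u, v) \<in> e}"
    using finite_edges[OF simple_graph_cartesian_product[OF sG sH]] by simp
  moreover have "finite ?L" "finite ?R"
    using finite_edges[OF sG] finite_edges[OF sH] by (simp_all add: EG_def EH_def)
  ultimately have "card ?L + card ?R \<le> degree (cartesian_product G H) (u, v)"
    unfolding degree_def by (simp add: card_Un_disjoint[symmetric] card_mono)
  then show ?thesis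
    unfolding card_image[OF inj_L] card_image[OF inj_R] by (simp add: degree_def EG_def EH_def)
qed

lemma max_degree_cartesian_product_ge:
  assumes "simple_graph G" "simple_graph H" "verts G \<noteq> {}" "verts H \<noteq> {}"
  shows "max_degree G + max_degree H \<le> max_degree (cartesian_product G H)"
proof -
  obtain u where "u \<in> verts G" "degree G u = max_degree G"
    using max_degree_attained assms(1,3) unfolding simple_graph_def by blast
  moreover obtain v where "v \<in> verts H" "degree H v = max_degree H"
    using max_degree_attained assms(2,4) unfolding simple_graph_def by blast
  ultimately have "max_degree G + max_degree H \<le> degree (cartesian_product G H) (u, v)"
    using degree_cartesian_product_ge[OF assms(1,2)] by metis
  also have "\<dots> \<le> max_degree (cartesian_product G H)"
    by (rule degree_le_max_degree[OF simple_graph_cartesian_product[OF assms(1,2)]])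
  finally show ?thesis .
qed

lemma inc_adjacent_image_copies:
  fixes \<phi> :: "'i \<Rightarrow> 'a \<Rightarrow> 'c"
  assumes inj: "\<And>v x w y. \<phi> v x = \<phi> w y \<Longrightarrow> v = w \<and> x = y"
    and "a \<in> e" "b \<in> f"
    and adj: "inc_adjacent (\<phi> v a, \<phi> v ` e) (\<phi> w b, \<phi> w ` f)"
  shows "v = w \<and> inc_adjacent (a, e) (b, f)"
proof -
  have inj_image: "\<phi> u ` A = \<phi> u ` B \<longleftrightarrow> A = B" for u A B
    by (rule inj_image_eq_iff) (meson inj injI)
  from adj consider "\<phi> v a = \<phi> w b" | "\<phi> v ` e = \<phi> w ` f"
    | "{\<phi> v a, \<phi> w b} = \<phi> v ` e" | "{\<phi> v a, \<phi> w b} = \<phi> w ` f"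
    unfolding inc_adjacent_def by auto
  then show ?thesis
  proof cases
    case 1
    then show ?thesis using inj by (simp add: inc_adjacent_def)
  next
    case 2
    moreover have "\<phi> v a \<in> \<phi> w ` f" using 2 \<open>a \<in> e\<close> by blast
    ultimately show ?thesis using inj inj_image by (fastforce simp: inc_adjacent_def)
  next
    case 3
    have "\<phi> w b \<in> \<phi> v ` e" using 3 by blast
    then have "v = w" using inj by blast
    with 3 have "{a, b} = e" using inj_image[of v "{a, b}" e] by simp
    with \<open>v = w\<close> show ?thesis by (simp add: inc_adjacent_def)
  next
    case 4
    have "\<phi> v a \<in> \<phi> w ` f" using 4 by blast
    then have "v = w" using inj by blast
    with 4 have "{a, b} = f" using inj_image[of w "{a, b}" f] by simp
    with \<open>v = w\<close> show ?thesis by (simp add: inc_adjacent_def)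
  qed
qed

lemma inc_adjacent_left_right_copies:
  assumes "a \<in> e" "b \<in> f"
    and adj: "inc_adjacent ((a, v), (\<lambda>x. (x, v)) ` e) ((u, b), Pair u ` f)"
  shows "v \<in> f"
proof -
  from adj consider "(a, v) = (u, b)" | "(\<lambda>x. (x, v)) ` e = Pair u ` f"
    | "{(a, v), (u, b)} = (\<lambda>x. (x, v)) ` e" | "{(a, v), (u, b)} = Pair u ` f"
    unfolding inc_adjacent_def by auto
  then have "b = v \<or> (a, v) \<in> Pair u ` f"
  proof cases
    case 2
    then show ?thesis using \<open>a \<in> e\<close> by blast
  next
    case 3
    then have "(u, b) \<in> (\<lambda>x. (x, v)) ` e" by blast
    then show ?thesis by blast
  qed auto
  then show ?thesis using \<open>b \<in> f\<close> by blast
qed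

section \<open>Colors seen from a vertex\<close>

definition colors_around :: "('a \<times> 'a set \<Rightarrow> nat) \<Rightarrow> 'a graph \<Rightarrow> 'a \<Rightarrow> nat set" where
  "colors_around c H v = {c (w, e) | w e. e \<in> edges H \<and> v \<in> e \<and> w \<in> e}"

definition colors_toward :: "('a \<times> 'a set \<Rightarrow> nat) \<Rightarrow> 'a graph \<Rightarrow> 'a \<Rightarrow> nat set" where
  "colors_toward c H v = {c (w, e) | w e. e \<in> edges H \<and> v \<in> e \<and> w \<in> e \<and> w \<noteq> v}"

lemma colors_around_eq:
  "colors_around c H v = (\<lambda>e. c (v, e)) ` {e \<in> edges H. v \<in> e} \<union> colors_toward c H v"
proof (intro equalityI subsetI)
  fix x assume "x \<in> colors_around c H v"
  then obtain w e where "x = c (w, e)" "e \<in> edges H" "v \<in> e" "w \<in> e"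
    unfolding colors_around_def by blast
  then show "x \<in> (\<lambda>e. c (v, e)) ` {e \<in> edges H. v \<in> e} \<union> colors_toward c H v"
    unfolding colors_toward_def by (cases "w = v") auto
qed (auto simp: colors_around_def colors_toward_def)

lemma colors_around_subset:
  "incidence_coloring H c k \<Longrightarrow> colors_around c H v \<subseteq> {..<k}"
  by (auto simp: colors_around_def incidences_def incidence_coloring_def)

lemma card_colors_toward_le_1:
  assumes sH: "simple_graph H" and reg: "regular H"
    and c: "incidence_coloring H c (max_degree H + 1)"
  shows "card (colors_toward c H v) \<le> 1"
proof (cases "v \<in> verts H")
  case True
  let ?Out = "(\<lambda>e. c (v, e)) ` {e \<in> edges H. v \<in> e}"
  have card_Out: "card ?Out = max_degree H"
    using card_image[OF inj_on_colors_at_vertex[OF c]] reg True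
    by (simp add: regular_def degree_def)
  have Out: "?Out \<subseteq> {..<max_degree H + 1}"
    using c by (auto simp: incidence_coloring_def incidences_def)
  have "colors_toward c H v \<subseteq> {..<max_degree H + 1} - ?Out"
  proof
    fix x assume "x \<in> colors_toward c H v"
    then obtain w e where x: "x = c (w, e)" "e \<in> edges H" "v \<in> e" "w \<in> e" "w \<noteq> v"
      unfolding colors_toward_def by blast
    then have "e = {w, v}" using sH by (auto simp: simple_graph_def card_2_iff)
    have "c (w, e) \<noteq> c (v, e')" if "e' \<in> edges H" "v \<in> e'" for e'
    proof -
      have "(w, e) \<in> incidences H" "(v, e') \<in> incidences H"
        using x that by (simp_all add: incidences_def)
      moreover have "inc_adjacent (w, e) (v, e')"
        using \<open>e = {w, v}\<close> by (simp add: inc_adjacent_def)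
      ultimately show ?thesis using c x(5) unfolding incidence_coloring_def by blast
    qed
    moreover have "(w, e) \<in> incidences H" using x by (simp add: incidences_def)
    ultimately show "x \<in> {..<max_degree H + 1} - ?Out"
      using x(1) incidence_coloring_range[OF c] by fastforce
  qed
  then have "card (colors_toward c H v) \<le> card ({..<max_degree H + 1} - ?Out)"
    by (intro card_mono) auto
  also have "\<dots> = 1"
    using card_Diff_subset[OF finite_subset[OF Out] Out] card_Out by simp
  finally show ?thesis .
next
  case False
  with sH have "colors_toward c H v = {}" by (auto simp: simple_graph_def colors_toward_def)
  then show ?thesis by (metis card.empty zero_le)
qed

lemma card_colors_around_le:
  assumes sub: "subgraph H H'" and reg: "regular H'"
    and c: "incidence_coloring H' c (max_degree H' + 1)"
  shows "card (colors_around c H v) \<le> max_degree H + 1"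
proof -
  have sH: "simple_graph H" and sH': "simple_graph H'" and E: "edges H \<subseteq> edges H'"
    using sub by (simp_all add: subgraph_def)
  let ?Out = "(\<lambda>e. c (v, e)) ` {e \<in> edges H. v \<in> e}"
  have "card ?Out \<le> card {e \<in> edges H. v \<in> e}"
    using finite_edges[OF sH] by (intro card_image_le) simp
  also have "\<dots> \<le> max_degree H"
    using degree_le_max_degree[OF sH] by (simp add: degree_def)
  finally have Out: "card ?Out \<le> max_degree H" .
  have "colors_toward c H' v \<subseteq> {..<max_degree H' + 1}"
    using c by (auto simp: incidence_coloring_def incidences_def colors_toward_def)
  moreover have "colors_toward c H v \<subseteq> colors_toward c H' v"
    using E unfolding colors_toward_def by blast
  ultimately have "card (colors_toward c H v) \<le> card (colors_toward c H' v)"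
    by (meson card_mono finite_lessThan finite_subset)
  also have "\<dots> \<le> 1"
    by (rule card_colors_toward_le_1[OF sH' reg c])
  finally have "card (colors_toward c H v) \<le> 1" .
  with Out show ?thesis
    using card_Un_le[of ?Out "colors_toward c H v"] by (simp add: colors_around_eq)
qed

lemma renamings_avoiding_colors_around:
  assumes "subgraph H H'" "regular H'" "incidence_coloring H' c (max_degree H' + 1)"
    and "max_degree H + 1 + k \<le> N"
  obtains \<tau> :: "'a \<Rightarrow> nat \<Rightarrow> nat"
  where "\<And>v. inj_on (\<tau> v) {..<k}" "\<And>v. \<tau> v ` {..<k} \<subseteq> {..<N} - colors_around c H v"
proof -
  have "\<exists>f. inj_on f {..<k} \<and> f ` {..<k} \<subseteq> {..<N} - colors_around c H v" for v
  proof -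
    have "colors_around c H v \<subseteq> {..<max_degree H' + 1}"
      using colors_around_subset incidence_coloring_subgraph assms(1,3)
      by (metis order_refl subgraph_def)
    then have "finite (colors_around c H v)" using finite_subset by blast
    moreover have "card (colors_around c H v) + k \<le> N"
      using card_colors_around_le[OF assms(1-3), of v] assms(4) by simp
    ultimately show ?thesis by (metis inj_into_complement)
  qed
  then show ?thesis using that by metis
qed

section \<open>Coloring the product\<close>

lemma incidence_coloring_cartesian_product:
  fixes cG :: "'a \<times> 'a set \<Rightarrow> nat" and cH :: "'b \<times> 'b set \<Rightarrow> nat"
  assumes sG: "simple_graph G" and sH: "simple_graph H"
    and cG: "incidence_coloring G cG k" and cH: "incidence_coloring H cH N"
    and inj_\<tau>: "\<And>v. inj_on (\<tau> v) {..<k}"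
    and range_\<tau>: "\<And>v. \<tau> v ` {..<k} \<subseteq> {..<N} - colors_around cH H v"
  shows "incidence_coloring (cartesian_product G H)
           (\<lambda>(x, e). if fst ` e \<in> edges G then \<tau> (snd x) (cG (fst x, fst ` e))
                     else cH (snd x, snd ` e)) N"
    (is "incidence_coloring ?P _ N")
proof -
  (* An edge lies in a G-layer iff its first projection is an edge of G;
     for an edge in an H-layer that projection is a singleton. *)
  define c :: "('a \<times> 'b) \<times> ('a \<times> 'b) set \<Rightarrow> nat" where
    "c = (\<lambda>(x, e). if fst ` e \<in> edges G then \<tau> (snd x) (cG (fst x, fst ` e))
                  else cH (snd x, snd ` e))"
  have c_left: "c ((a, v), (\<lambda>x. (x, v)) ` e) = \<tau> v (cG (a, e))" if "e \<in> edges G" for a v e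
  proof -
    have "fst ` (\<lambda>x. (x, v)) ` e = e" by force
    with that show ?thesis by (simp add: c_def)
  qed
  have c_right: "c ((u, b), Pair u ` f) = cH (b, f)" if "(b, f) \<in> incidences H" for u b f
  proof -
    from that have "fst ` Pair u ` f = {u}" "snd ` Pair u ` f = f"
      by (force simp: incidences_def)+
    moreover have "{u} \<notin> edges G" using sG by (auto simp: simple_graph_def)
    ultimately show ?thesis by (simp add: c_def)
  qed
  have cG_range: "cG i \<in> {..<k}" if "i \<in> incidences G" for i
    using cG that by (simp add: incidence_coloring_def)
  have left_range: "c ((a, v), (\<lambda>x. (x, v)) ` e) \<in> {..<N} - colors_around cH H v"
    if "(a, e) \<in> incidences G" for a v e
    using that c_left cG_range range_\<tau> by (fastforce simp: incidences_def)
  have right_range: "c ((u, b), Pair u ` f) \<in> {..<N}" if "(b, f) \<in> incidences H" for u b f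
    using that c_right cH by (simp add: incidence_coloring_def)
  have left_left: "c i \<noteq> c j"
    if "i = ((a, v), (\<lambda>x. (x, v)) ` e)" "(a, e) \<in> incidences G"
      "j = ((b, w), (\<lambda>x. (x, w)) ` f)" "(b, f) \<in> incidences G"
      "i \<noteq> j" "inc_adjacent i j" for i j a v e b w f
  proof -
    have "v = w \<and> inc_adjacent (a, e) (b, f)"
      by (rule inc_adjacent_image_copies[where \<phi> = "\<lambda>v x. (x, v)"])
        (use that in \<open>auto simp: incidences_def\<close>)
    then have "v = w" "inc_adjacent (a, e) (b, f)" by simp_all
    moreover from this that(1,3,5) have "(a, e) \<noteq> (b, f)" by auto
    ultimately have "cG (a, e) \<noteq> cG (b, f)"
      using cG that(2,4) by (auto simp: incidence_coloring_def)
    moreover have "cG (a, e) \<in> {..<k}" "cG (b, f) \<in> {..<k}"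
      using cG_range that(2,4) by blast+
    ultimately have "\<tau> v (cG (a, e)) \<noteq> \<tau> v (cG (b, f))"
      using inj_on_eq_iff[OF inj_\<tau>[of v]] by blast
    then show ?thesis using c_left that(1-4) \<open>v = w\<close> by (simp add: incidences_def)
  qed
  have right_right: "c i \<noteq> c j"
    if "i = ((u, a), Pair u ` e)" "(a, e) \<in> incidences H"
      "j = ((w, b), Pair w ` f)" "(b, f) \<in> incidences H"
      "i \<noteq> j" "inc_adjacent i j" for i j u a e w b f
  proof -
    have "u = w \<and> inc_adjacent (a, e) (b, f)"
      by (rule inc_adjacent_image_copies[where \<phi> = Pair])
        (use that in \<open>auto simp: incidences_def\<close>)
    then have "u = w" "inc_adjacent (a, e) (b, f)" by simp_all
    moreover from this that(1,3,5) have "(a, e) \<noteq> (b, f)" by auto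
    ultimately have "cH (a, e) \<noteq> cH (b, f)"
      using cH that(2,4) by (auto simp: incidence_coloring_def)
    then show ?thesis using c_right that(1-4) by simp
  qed
  have left_right: "c i \<noteq> c j"
    if "i = ((a, v), (\<lambda>x. (x, v)) ` e)" "(a, e) \<in> incidences G"
      "j = ((u, b), Pair u ` f)" "(b, f) \<in> incidences H"
      "inc_adjacent i j" for i j a v e u b f
  proof -
    have "v \<in> f"
      using inc_adjacent_left_right_copies that by (auto simp: incidences_def)
    then have "cH (b, f) \<in> colors_around cH H v"
      using that(4) by (auto simp: colors_around_def incidences_def)
    moreover have "c i \<notin> colors_around cH H v"
      using left_range[OF that(2)] that(1) by blast
    ultimately show ?thesis using c_right[OF that(4)] that(3) by auto
  qed
  have "incidence_coloring ?P c N"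
    unfolding incidence_coloring_def
  proof (intro conjI ballI impI)
    fix i assume "i \<in> incidences ?P"
    with sG sH show "c i < N"
      by (cases rule: incidence_cartesian_product_cases) (use left_range right_range in auto)
  next
    fix i j assume i: "i \<in> incidences ?P" and j: "j \<in> incidences ?P"
      and ij: "i \<noteq> j \<and> inc_adjacent i j"
    from sG sH i show "c i \<noteq> c j"
    proof (cases rule: incidence_cartesian_product_cases)
      case i_left: left
      from sG sH j show ?thesis
      proof (cases rule: incidence_cartesian_product_cases)
        case left
        with i_left ij show ?thesis by (metis left_left)
      next
        case right
        with i_left ij show ?thesis by (metis left_right)
      qed
    next
      case i_right: right
      from sG sH j show ?thesis
      proof (cases rule: incidence_cartesian_product_cases)
        case left
        with i_right ij show ?thesis by (metis left_right inc_adjacent_sym)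
      next
        case right
        with i_right ij show ?thesis by (metis right_right)
      qed
    qed
  qed
  then show ?thesis by (simp only: c_def)
qed

theorem mainTheorem2:
  fixes G :: "'a graph" and H H' :: "'b graph"
  assumes "simple_graph G" and "delta_plus_graph 1 G"
    and "subgraph H H'" and "regular H'" and "delta_plus_graph 1 H'"
    and "max_degree G + 1 \<ge> max_degree H' - max_degree H"
  shows "incidence_chromatic (cartesian_product G H)
           \<le> max_degree (cartesian_product G H) + 2"
proof -
  have sH: "simple_graph H" and E: "edges H \<subseteq> edges H'"
    using assms(3) by (simp_all add: subgraph_def)
  obtain cG where cG: "incidence_coloring G cG (max_degree G + 1)"
    using assms(2) by (auto simp: delta_plus_graph_def)
  obtain cH where cH': "incidence_coloring H' cH (max_degree H' + 1)"
    using assms(5) by (auto simp: delta_plus_graph_def)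
  define N where "N = max_degree G + max_degree H + 2"
  have cH: "incidence_coloring H cH N"
    using incidence_coloring_subgraph[OF cH' E] assms(6) by (simp add: N_def)
  obtain \<tau> where "\<And>v. inj_on (\<tau> v) {..<max_degree G + 1}"
    and "\<And>v. \<tau> v ` {..<max_degree G + 1} \<subseteq> {..<N} - colors_around cH H v"
    by (rule renamings_avoiding_colors_around[OF assms(3,4) cH',
          where k = "max_degree G + 1" and N = N]) (auto simp: N_def)
  then have colorable: "incidence_chromatic (cartesian_product G H) \<le> N"
    by (rule incidence_chromatic_le[OF incidence_coloring_cartesian_product[OF assms(1) sH cG cH]])
  show ?thesis
  proof (cases "verts G = {} \<or> verts H = {}")
    case True
    then show ?thesis
      by (simp add: edges_cartesian_product_eq_empty[OF assms(1) sH]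
          incidence_chromatic_eq_0_if_no_edges)
  next
    case False
    then show ?thesis
      using colorable max_degree_cartesian_product_ge[OF assms(1) sH] by (simp add: N_def)
  qed
qed

end
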